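(* Let $\Phi_0$ be a finite reduced root system with simple roots $\{\alpha_i\mid i\in I_0\}$, root lattice $Q_0=\bigoplus_{i\in I_0}\mathbb{Z}\alpha_i$, $Q_{0,+}=\bigoplus_{i\in I_0}\mathbb{N}\alpha_i$, and Weyl group $W_0$. Let $P\subseteq Q_{0,+}\cup(-Q_{0,+})$ be a $W_0$-stable subset. Then every $\alpha\in P$ is $W_0$-conjugate to an integer multiple of a simple root. *)

theory Defs
  imports "HOL-Analysis.Analysis"
begin

definition refl_vec :: "'a::real_inner \<Rightarrow> 'a \<Rightarrow> 'a" where
  "refl_vec a v = v - ((2 * (v \<bullet> a)) / (a \<bullet> a)) *\<^sub>R a"

definition reduced_root_system :: "'a::euclidean_space set \<Rightarrow> bool" where
  "reduced_root_system R \<longleftrightarrow>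
     finite R \<and> 0 \<notin> R \<and> span R = UNIV \<and>
     (\<forall>a\<in>R. \<forall>b\<in>R. refl_vec a b \<in> R) \<and>
     (\<forall>a\<in>R. \<forall>b\<in>R. (2 * (b \<bullet> a)) / (a \<bullet> a) \<in> \<int>) \<and>
     (\<forall>a\<in>R. \<forall>c::real. c *\<^sub>R a \<in> R \<longrightarrow> c = 1 \<or> c = -1)"

definition pos_root_cone :: "'a::real_vector set \<Rightarrow> 'a set" where
  "pos_root_cone S = {v. \<exists>c::'a \<Rightarrow> nat. v = (\<Sum>a\<in>S. real (c a) *\<^sub>R a)}"

definition root_lattice :: "'a::real_vector set \<Rightarrow> 'a set" where
  "root_lattice S = {v. \<exists>c::'a \<Rightarrow> int. v = (\<Sum>a\<in>S. real_of_int (c a) *\<^sub>R a)}"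

definition simple_roots :: "'a::euclidean_space set \<Rightarrow> 'a set \<Rightarrow> bool" where
  "simple_roots R S \<longleftrightarrow> S \<subseteq> R \<and> independent S \<and>
     (\<forall>b\<in>R. b \<in> pos_root_cone S \<or> - b \<in> pos_root_cone S)"

inductive_set weyl_group :: "'a::real_inner set \<Rightarrow> ('a \<Rightarrow> 'a) set" for R where
  weyl_id: "id \<in> weyl_group R"
| weyl_step: "w \<in> weyl_group R \<Longrightarrow> a \<in> R \<Longrightarrow> refl_vec a \<circ> w \<in> weyl_group R"

end

theory Submission
  imports Defs
begin

text \<open>
  Descent on the height \<open>\<Sum>\<^sub>i c\<^sub>i\<close> of \<open>\<alpha> = \<Sum>\<^sub>i c\<^sub>i \<alpha>\<^sub>i \<in> Q\<^sub>+\<close>. Since \<open>0 < (\<alpha>, \<alpha>) = \<Sum>\<^sub>i c\<^sub>i (\<alpha>\<^sub>i, \<alpha>)\<close>,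
  some simple root \<open>\<alpha>\<^sub>b\<close> has \<open>(\<alpha>\<^sub>b, \<alpha>) > 0\<close>, and \<open>s\<^sub>b \<alpha> = \<alpha> - k \<alpha>\<^sub>b\<close> with \<open>k > 0\<close>.
  If \<open>\<alpha>\<close> has two nonzero coordinates, one of them survives in \<open>s\<^sub>b \<alpha>\<close>, so \<open>s\<^sub>b \<alpha>\<close>, which lies in
  \<open>P \<subseteq> Q\<^sub>+ \<union> -Q\<^sub>+\<close>, lies in \<open>Q\<^sub>+\<close> and has smaller height. The descent stops at an element
  with at most one nonzero coordinate, i.e. a multiple of a simple root. Negative elements
  are handled by applying this to \<open>-P\<close>, which is again \<open>W\<^sub>0\<close>-stable as \<open>W\<^sub>0\<close> acts linearly.
\<close>

lemma independent_sum_scaleR_coeff_eq: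
  fixes S :: "'a::real_vector set"
  assumes "independent S" "finite S" "b \<in> S"
    and "(\<Sum>a\<in>S. f a *\<^sub>R a) = (\<Sum>a\<in>S. g a *\<^sub>R a)"
  shows "f b = g b"
proof -
  have "(\<Sum>a\<in>S. (f a - g a) *\<^sub>R a) = 0"
    using assms(4) by (simp add: scaleR_diff_left sum_subtractf)
  then have "f b - g b = 0"
    using assms(1-3) by (intro real_vector.independentD[where t = S]) auto
  then show ?thesis by simp
qed

lemma sum_single_support_scaleR:
  fixes S :: "'a::real_vector set"
  assumes "finite S" "b \<in> S" "\<And>a. a \<in> S \<Longrightarrow> a \<noteq> b \<Longrightarrow> c a = 0"
  shows "(\<Sum>a\<in>S. c a *\<^sub>R a) = c b *\<^sub>R b"
  using assms by (subst sum.remove[of S b]) auto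

lemma sum_scaleR_minus_scaleR_member:
  fixes S :: "'a::real_vector set"
  assumes "finite S" "b \<in> S"
  shows "(\<Sum>a\<in>S. c a *\<^sub>R a) - k *\<^sub>R b = (\<Sum>a\<in>S. (c a - (if a = b then k else 0)) *\<^sub>R a)"
proof -
  have "(\<Sum>a\<in>S. (if a = b then k else 0) *\<^sub>R a) = (\<Sum>a\<in>S. if a = b then k *\<^sub>R b else 0)"
    by (rule sum.cong) auto
  also have "\<dots> = k *\<^sub>R b"
    using assms by simp
  finally show ?thesis
    by (simp add: scaleR_diff_left sum_subtractf)
qed

lemma nonneg_combination_inner_pos:
  fixes y :: "'a::real_inner"
  assumes "y = (\<Sum>a\<in>S. c a *\<^sub>R a)" "y \<noteq> 0" "\<And>a. a \<in> S \<Longrightarrow> 0 \<le> c a"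
  shows "\<exists>b\<in>S. 0 < b \<bullet> y"
proof (rule ccontr)
  assume "\<not> ?thesis"
  then have "(\<Sum>a\<in>S. c a * (a \<bullet> y)) \<le> 0"
    using assms(3) by (intro sum_nonpos) (simp add: mult_nonneg_nonpos not_less)
  moreover have "y \<bullet> y = (\<Sum>a\<in>S. c a * (a \<bullet> y))"
    using assms(1) by (simp add: inner_sum_left)
  ultimately show False
    using assms(2) by (metis inner_gt_zero_iff not_le)
qed

lemma simple_roots_finite: "reduced_root_system R \<Longrightarrow> simple_roots R S \<Longrightarrow> finite S"
  unfolding reduced_root_system_def simple_roots_def using finite_subset by blast

lemma simple_roots_nonempty:
  fixes R :: "'a::euclidean_space set"
  assumes "reduced_root_system R" "simple_roots R S"
  shows "S \<noteq> {}"
proof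
  assume "S = {}"
  then have cone: "pos_root_cone S = {0}"
    unfolding pos_root_cone_def by simp
  have "R \<noteq> {}"
  proof
    assume "R = {}"
    then have "(UNIV :: 'a set) = {0}"
      using assms(1) unfolding reduced_root_system_def by simp
    then show False
      using nonempty_Basis nonzero_Basis by (metis UNIV_I ex_in_conv singletonD)
  qed
  then obtain b where "b \<in> R" by blast
  with assms cone show False
    unfolding reduced_root_system_def simple_roots_def by force
qed

lemma weyl_group_comp_refl:
  "w \<in> weyl_group R \<Longrightarrow> a \<in> R \<Longrightarrow> w \<circ> refl_vec a \<in> weyl_group R"
proof (induction rule: weyl_group.induct)
  case weyl_id
  then show ?case
    using weyl_group.weyl_step[OF weyl_group.weyl_id] by simp
next
  case (weyl_step w b)
  from weyl_step.IH[OF weyl_step.prems] weyl_step.hyps(2)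
  have "refl_vec b \<circ> (w \<circ> refl_vec a) \<in> weyl_group R"
    by (rule weyl_group.weyl_step)
  then show ?case
    by (simp only: comp_assoc)
qed

lemma weyl_group_minus: "w \<in> weyl_group R \<Longrightarrow> w (- x) = - w x"
  by (induction arbitrary: x rule: weyl_group.induct) (auto simp: refl_vec_def)

lemma refl_simple_root_lowers_height:
  fixes R S :: "'a::euclidean_space set"
  assumes R: "reduced_root_system R" and S: "simple_roots R S"
    and y: "y = (\<Sum>a\<in>S. real (c a) *\<^sub>R a)"
    and two: "a1 \<in> S" "a2 \<in> S" "a1 \<noteq> a2" "c a1 > 0" "c a2 > 0"
    and refl_signed: "\<And>b. b \<in> S \<Longrightarrow> refl_vec b y \<in> pos_root_cone S \<union> uminus ` pos_root_cone S"
  obtains b d where "b \<in> S" "refl_vec b y = (\<Sum>a\<in>S. real (d a) *\<^sub>R a)" "sum d S < sum c S"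
proof -
  have fin: "finite S" and ind: "independent S" and SR: "S \<subseteq> R"
    using simple_roots_finite[OF R S] S unfolding simple_roots_def by auto
  have "y \<noteq> 0"
  proof
    assume "y = 0"
    then have "(\<Sum>a\<in>S. real (c a) *\<^sub>R a) = (\<Sum>a\<in>S. (\<lambda>_. 0) a *\<^sub>R a)"
      using y by simp
    from independent_sum_scaleR_coeff_eq[OF ind fin two(1) this] two(4) show False by simp
  qed
  then obtain b where b: "b \<in> S" "0 < b \<bullet> y"
    using nonneg_combination_inner_pos[OF y] by auto
  have "0 < b \<bullet> b"
    using b(1) SR R unfolding reduced_root_system_def by auto
  define k where "k = 2 * (y \<bullet> b) / (b \<bullet> b)"
  have k_pos: "0 < k"
    unfolding k_def using b(2) \<open>0 < b \<bullet> b\<close> by (simp add: inner_commute)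
  define e where "e a = real (c a) - (if a = b then k else 0)" for a
  have refl_e: "refl_vec b y = (\<Sum>a\<in>S. e a *\<^sub>R a)"
    unfolding refl_vec_def e_def
    using sum_scaleR_minus_scaleR_member[OF fin b(1), of "\<lambda>a. real (c a)" k]
    by (simp add: y k_def)
  obtain g where g: "g \<in> S" "g \<noteq> b" "c g > 0"
    using two by metis
  have "refl_vec b y \<notin> uminus ` pos_root_cone S"
  proof
    assume "refl_vec b y \<in> uminus ` pos_root_cone S"
    then obtain d :: "'a \<Rightarrow> nat" where "(\<Sum>a\<in>S. e a *\<^sub>R a) = (\<Sum>a\<in>S. (- real (d a)) *\<^sub>R a)"
      unfolding pos_root_cone_def refl_e by (auto simp: sum_negf)
    from independent_sum_scaleR_coeff_eq[OF ind fin g(1) this] g show False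
      unfolding e_def by simp
  qed
  with refl_signed[OF b(1)] obtain d :: "'a \<Rightarrow> nat"
    where d: "refl_vec b y = (\<Sum>a\<in>S. real (d a) *\<^sub>R a)"
    unfolding pos_root_cone_def by blast
  have "real (sum d S) = (\<Sum>a\<in>S. e a)"
    using independent_sum_scaleR_coeff_eq[OF ind fin _ d[symmetric, unfolded refl_e]] by simp
  also have "\<dots> = real (sum c S) - k"
    unfolding e_def using b(1) fin by (simp add: sum_subtractf)
  finally have "sum d S < sum c S"
    using k_pos by linarith
  with b(1) d show ?thesis by (rule that)
qed

lemma weyl_conjugate_simple_multiple_pos:
  fixes R S P :: "'a::euclidean_space set"
  assumes R: "reduced_root_system R" and S: "simple_roots R S"
    and P_signed: "P \<subseteq> pos_root_cone S \<union> uminus ` pos_root_cone S"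
    and P_stable: "\<And>w x. w \<in> weyl_group R \<Longrightarrow> x \<in> P \<Longrightarrow> w x \<in> P"
    and x: "x \<in> P" "x \<in> pos_root_cone S"
  shows "\<exists>w\<in>weyl_group R. \<exists>a\<in>S. \<exists>n::int. w x = real_of_int n *\<^sub>R a"
proof -
  obtain c :: "'a \<Rightarrow> nat" where "x = (\<Sum>a\<in>S. real (c a) *\<^sub>R a)"
    using x(2) unfolding pos_root_cone_def by blast
  with x(1) show ?thesis
  proof (induction "sum c S" arbitrary: c x rule: less_induct)
    case less
    show ?case
    proof (cases "\<exists>a1\<in>S. \<exists>a2\<in>S. a1 \<noteq> a2 \<and> c a1 > 0 \<and> c a2 > 0")
      case True
      then obtain a1 a2 where two: "a1 \<in> S" "a2 \<in> S" "a1 \<noteq> a2" "c a1 > 0" "c a2 > 0"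
        by blast
      have refl_in_P: "refl_vec b x \<in> P" if "b \<in> S" for b
        using P_stable[OF weyl_group.weyl_step[OF weyl_group.weyl_id] less.prems(1)] that S
        unfolding simple_roots_def by auto
      then obtain b d where b: "b \<in> S" "refl_vec b x = (\<Sum>a\<in>S. real (d a) *\<^sub>R a)"
          and lower: "sum d S < sum c S"
        using refl_simple_root_lowers_height[OF R S less.prems(2) two] P_signed by blast
      obtain w a n where w: "w \<in> weyl_group R" "a \<in> S" "w (refl_vec b x) = real_of_int n *\<^sub>R a"
        using less.hyps[OF lower refl_in_P[OF b(1)] b(2)] by blast
      have "w \<circ> refl_vec b \<in> weyl_group R"
        using weyl_group_comp_refl[OF w(1)] b(1) S unfolding simple_roots_def by auto
      moreover have "(w \<circ> refl_vec b) x = real_of_int n *\<^sub>R a"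
        using w(3) by simp
      ultimately show ?thesis
        using w(2) by blast
    next
      case False
      obtain b where b: "b \<in> S" "\<And>a. a \<in> S \<Longrightarrow> a \<noteq> b \<Longrightarrow> c a = 0"
        using False simple_roots_nonempty[OF R S] by (metis all_not_in_conv neq0_conv)
      then have "id x = real_of_int (int (c b)) *\<^sub>R b"
        using sum_single_support_scaleR[OF simple_roots_finite[OF R S] b(1), of "\<lambda>a. real (c a)"]
          b(2) less.prems(2) by simp
      with b(1) weyl_group.weyl_id show ?thesis by blast
    qed
  qed
qed

theorem lemma8p19:
  fixes R S P :: "'a::euclidean_space set"
  assumes "reduced_root_system R"
    and "simple_roots R S"
    and "P \<subseteq> pos_root_cone S \<union> uminus ` pos_root_cone S"
    and "\<And>w x. w \<in> weyl_group R \<Longrightarrow> x \<in> P \<Longrightarrow> w x \<in> P"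
  shows "\<forall>x\<in>P. \<exists>w\<in>weyl_group R. \<exists>a\<in>S. \<exists>n::int. w x = real_of_int n *\<^sub>R a"
proof
  fix x assume x: "x \<in> P"
  show "\<exists>w\<in>weyl_group R. \<exists>a\<in>S. \<exists>n::int. w x = real_of_int n *\<^sub>R a"
  proof (cases "x \<in> pos_root_cone S")
    case True
    with assms x show ?thesis
      by (intro weyl_conjugate_simple_multiple_pos)
  next
    case False
    with x assms(3) have "- x \<in> uminus ` P" "- x \<in> pos_root_cone S"
      by auto
    moreover have "uminus ` P \<subseteq> pos_root_cone S \<union> uminus ` pos_root_cone S"
      using assms(3) by auto
    moreover have "w y \<in> uminus ` P" if "w \<in> weyl_group R" "y \<in> uminus ` P" for w y
      using that assms(4) weyl_group_minus by fastforce
    ultimately obtain w a n where w: "w \<in> weyl_group R" "a \<in> S" "w (- x) = real_of_int n *\<^sub>R a"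
      using weyl_conjugate_simple_multiple_pos[OF assms(1,2), of "uminus ` P" "- x"] by blast
    then have "w x = real_of_int (- n) *\<^sub>R a"
      using weyl_group_minus[OF w(1), of x] by (metis minus_minus of_int_minus scaleR_minus_left)
    with w show ?thesis by blast
  qed
qed

end
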